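(* Let $G$ be a finite additive group of order $v$ and let $\mathcal{F}=\{B_1,B_2,\{0\}\}$ be a $(v,[k_1,k_2,1],\lambda)$ partitioned difference family in $G$ (with $|B_1|=k_1$, $|B_2|=k_2$). Then for $i=1,2$: (i) if $v-\lambda$ is odd, $B_i$ is a $\left(v,\frac{v-1}{2},\frac{v-3}{4}\right)$ difference set in $G$; (ii) if $v-\lambda$ is even, $B_i$ is a $(G,k_i,\alpha_i,\alpha_i+1)$ partial difference set with $\alpha_i=k_i+\frac{\lambda-v}{2}$.
   Context: Difference in $G$: $x-y:=x+(-y)$. For $B\subseteq G$, $\Delta B$ is the multiset $\{x-y: x,y\in B, x\neq y\}$; for $\mathcal{F}=\{B_1,\dots,B_t\}$, $\Delta\mathcal{F}$ is the multiset union of the $\Delta B_i$. A $(v,[k_1,\dots,k_t],\lambda)$ partitioned difference family in $G$ is a collection of subsets $B_1,\dots,B_t$ partitioning $G$ with $|B_i|=k_i$ such that $\Delta\mathcal{F}$ contains every non-zero element of $G$ exactly $\lambda$ times. A $k$-subset $B$ is a $(v,k,\mu)$ difference set if $\Delta B$ contains every non-zero element of $G$ exactly $\mu$ times. A $k$-subset $B$ of $G$ is a $(G,k,\alpha,\beta)$ (or $(v,k,\alpha,\beta)$) partial difference set if $\Delta B$ contains every non-zero element of $B$ exactly $\alpha$ times and every non-zero element of $G\setminus B$ exactly $\beta$ times. *)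

theory Defs
  imports Complex_Main
begin

text \<open>The group G is the (finite) type 'a itself; its order v is CARD('a).
  Multiplicity of g in the multiset Delta B = {x - y : x,y in B, x ~= y}.\<close>
definition diff_count :: "'a::ab_group_add set \<Rightarrow> 'a \<Rightarrow> nat" where
  "diff_count B g = card {(x, y). x \<in> B \<and> y \<in> B \<and> x \<noteq> y \<and> x - y = g}"

definition partitioned_difference_family :: "'a::{ab_group_add,finite} set list \<Rightarrow> nat \<Rightarrow> bool" where
  "partitioned_difference_family Bs lam \<longleftrightarrow>
     (\<forall>i<length Bs. Bs ! i \<noteq> {}) \<and>
     (\<forall>i<length Bs. \<forall>j<length Bs. i \<noteq> j \<longrightarrow> Bs ! i \<inter> Bs ! j = {}) \<and>
     \<Union> (set Bs) = UNIV \<and>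
     (\<forall>g. g \<noteq> 0 \<longrightarrow> (\<Sum>i<length Bs. diff_count (Bs ! i) g) = lam)"

text \<open>(v,k,mu) difference set in G (v = CARD('a)); parameters are real so that
  fractional expressions such as (v-1)/2 are stated exactly.\<close>
definition difference_set :: "'a::{ab_group_add,finite} set \<Rightarrow> real \<Rightarrow> real \<Rightarrow> bool" where
  "difference_set B k mu \<longleftrightarrow>
     real (card B) = k \<and> (\<forall>g. g \<noteq> 0 \<longrightarrow> real (diff_count B g) = mu)"

definition partial_difference_set :: "'a::{ab_group_add,finite} set \<Rightarrow> real \<Rightarrow> real \<Rightarrow> real \<Rightarrow> bool" where
  "partial_difference_set B k \<alpha> \<beta> \<longleftrightarrow>
     real (card B) = k \<and>
     (\<forall>g. g \<in> B \<and> g \<noteq> 0 \<longrightarrow> real (diff_count B g) = \<alpha>) \<and>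
     (\<forall>g. g \<notin> B \<and> g \<noteq> 0 \<longrightarrow> real (diff_count B g) = \<beta>)"

end

theory Submission imports Defs begin

(* Let k = |B| and let C = G - (B \<union> {0}) be the other block. Counting the differences in C
   through the complement of B \<union> {0} gives, for g \<noteq> 0,
     lam + 2k + 2 = v + 2 d_B(g) + [g \<in> B] + [-g \<in> B].
   So v - lam is even exactly when B = -B, and then d_B(g) is k + (lam - v)/2 on B and one more
   off B. If v - lam is odd, exactly one of g, -g lies in B, so G - {0} is the disjoint union of
   B and -B, v = 2k + 1 and d_B(g) = lam/2 for all g \<noteq> 0; summing d_B over G - {0} then
   gives lam = k - 1. *)

lemma diff_count_eq_card_Int:
  fixes B :: "'a::ab_group_add set"
  assumes "g \<noteq> 0"
  shows "diff_count B g = card (B \<inter> {y. y + g \<in> B})"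
proof -
  have "{(x, y). x \<in> B \<and> y \<in> B \<and> x \<noteq> y \<and> x - y = g} = (\<lambda>y. (y + g, y)) ` (B \<inter> {y. y + g \<in> B})"
    using assms by (auto simp: image_iff algebra_simps)
  moreover have "inj (\<lambda>y::'a. (y + g, y))"
    by (auto intro: injI)
  ultimately show ?thesis
    unfolding diff_count_def by (simp add: card_image inj_on_subset)
qed

lemma card_translate_preimage:
  fixes A :: "'a::ab_group_add set"
  shows "card {y. y + g \<in> A} = card A"
proof -
  have "{y. y + g \<in> A} = (\<lambda>x. x - g) ` A"
    by (force simp: image_iff algebra_simps)
  then show ?thesis
    by (simp add: card_image)
qed

lemma card_Compl_add:
  fixes A :: "'a::finite set"
  shows "card (- A) + card A = card (UNIV :: 'a set)"
  using card_Un_disjoint[of "- A" A] by (simp add: Un_commute)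

lemma diff_count_Compl:
  fixes A :: "'a::{ab_group_add,finite} set"
  assumes "g \<noteq> 0"
  shows "diff_count (- A) g + 2 * card A = card (UNIV :: 'a set) + diff_count A g"
proof -
  let ?A' = "{y. y + g \<in> A}"
  have "- A \<inter> {y. y + g \<in> - A} = - (A \<union> ?A')"
    by auto
  then have "diff_count (- A) g = card (- (A \<union> ?A'))"
    using diff_count_eq_card_Int[OF assms, of "- A"] by (simp only:)
  then have "diff_count (- A) g + card (A \<union> ?A') = card (UNIV :: 'a set)"
    using card_Compl_add[of "A \<union> ?A'"] by (simp only:)
  moreover have "card A + card ?A' = card (A \<union> ?A') + diff_count A g"
    using diff_count_eq_card_Int[OF assms, of A] card_Un_Int[of A ?A'] by simp
  ultimately show ?thesis
    using card_translate_preimage[of g A] by linarith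
qed

lemma diff_count_insert_zero:
  fixes B :: "'a::ab_group_add set"
  assumes "finite B" "0 \<notin> B" "g \<noteq> 0"
  shows "diff_count (insert 0 B) g = diff_count B g + of_bool (g \<in> B) + of_bool (- g \<in> B)"
proof -
  let ?S = "B \<inter> {y. y + g \<in> B}"
  have "insert 0 B \<inter> {y. y + g \<in> insert 0 B} = ?S \<union> {y. y = 0 \<and> g \<in> B} \<union> {y. y = - g \<and> - g \<in> B}"
    using assms(2,3) by (auto simp: add_eq_0_iff2)
  moreover have "card (?S \<union> {y. y = 0 \<and> g \<in> B} \<union> {y. y = - g \<and> - g \<in> B})
      = card ?S + of_bool (g \<in> B) + of_bool (- g \<in> B)"
    using assms by (cases "g \<in> B"; cases "- g \<in> B") (auto simp: card_insert_if)
  ultimately show ?thesis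
    using assms(3) by (simp add: diff_count_eq_card_Int)
qed

lemma card_offdiagonal:
  assumes "finite B"
  shows "card {(x, y). x \<in> B \<and> y \<in> B \<and> x \<noteq> y} = card B * (card B - 1)"
proof -
  let ?P = "{(x, y). x \<in> B \<and> y \<in> B \<and> x \<noteq> y}" and ?D = "(\<lambda>x. (x, x)) ` B"
  have "finite ?P"
    using assms by (auto intro: finite_subset[of _ "B \<times> B"])
  moreover have "B \<times> B = ?P \<union> ?D" and "?P \<inter> ?D = {}"
    by auto
  ultimately have "card B * card B = card ?P + card ?D"
    using assms by (simp add: card_Un_disjoint flip: card_cartesian_product)
  moreover have "card ?D = card B"
    by (simp add: card_image inj_on_def)
  ultimately show ?thesis
    by (simp add: diff_mult_distrib2)
qed

lemma sum_diff_count: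
  fixes B :: "'a::{ab_group_add,finite} set"
  shows "(\<Sum>g\<in>- {0}. diff_count B g) = card B * (card B - 1)"
proof -
  let ?P = "{(x, y). x \<in> B \<and> y \<in> B \<and> x \<noteq> y}"
  have fibre: "diff_count B g = card {p \<in> ?P. fst p - snd p = g}" for g
    unfolding diff_count_def by (rule arg_cong[where f = card]) auto
  have "(\<lambda>p. fst p - snd p) ` ?P \<subseteq> - {0}"
    by auto
  from sum.group[OF finite finite this, of "\<lambda>_. 1 :: nat"]
  have "(\<Sum>g\<in>- {0}. card {p \<in> ?P. fst p - snd p = g}) = card ?P"
    by (simp only: card_eq_sum)
  then show ?thesis
    by (simp add: fibre card_offdiagonal)
qed

locale pdf_with_zero_block =
  fixes B :: "'a::{ab_group_add,finite} set" and lam :: nat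
  assumes zero_notin_block: "0 \<notin> B"
    and diff_count_sum_eq_lam: "g \<noteq> 0 \<Longrightarrow> diff_count B g + diff_count (- insert 0 B) g = lam"
begin

lemma lam_diff_count_eq:
  assumes "g \<noteq> 0"
  shows "lam + 2 * card B + 2
    = card (UNIV :: 'a set) + 2 * diff_count B g + of_bool (g \<in> B) + of_bool (- g \<in> B)"
  using diff_count_Compl[OF assms, of "insert 0 B"] diff_count_sum_eq_lam[OF assms]
    diff_count_insert_zero[OF finite zero_notin_block assms] zero_notin_block
  by simp

lemma even_iff_symmetric:
  assumes "g \<noteq> 0"
  shows "even (int (card (UNIV :: 'a set)) - int lam) \<longleftrightarrow> (g \<in> B \<longleftrightarrow> - g \<in> B)"
  using lam_diff_count_eq[OF assms] by (cases "g \<in> B"; cases "- g \<in> B"; simp; presburger)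

lemma partial_difference_set_if_even:
  assumes "even (int (card (UNIV :: 'a set)) - int lam)"
  shows "partial_difference_set B (real (card B))
           (real (card B) + (real lam - real (card (UNIV :: 'a set))) / 2)
           (real (card B) + (real lam - real (card (UNIV :: 'a set))) / 2 + 1)"
  unfolding partial_difference_set_def
proof (intro conjI allI impI refl)
  fix g assume "g \<in> B \<and> g \<noteq> 0"
  then have "lam + 2 * card B = card (UNIV :: 'a set) + 2 * diff_count B g"
    using lam_diff_count_eq[of g] even_iff_symmetric[of g] assms by simp
  from this[THEN arg_cong[where f = real]]
  show "real (diff_count B g) = real (card B) + (real lam - real (card (UNIV :: 'a set))) / 2"
    by (simp add: field_simps)
next
  fix g assume "g \<notin> B \<and> g \<noteq> 0"
  then have "lam + 2 * card B + 2 = card (UNIV :: 'a set) + 2 * diff_count B g"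
    using lam_diff_count_eq[of g] even_iff_symmetric[of g] assms by simp
  from this[THEN arg_cong[where f = real]]
  show "real (diff_count B g) = real (card B) + (real lam - real (card (UNIV :: 'a set))) / 2 + 1"
    by (simp add: field_simps)
qed

lemma difference_set_if_odd:
  assumes odd: "odd (int (card (UNIV :: 'a set)) - int lam)"
  shows "difference_set B ((real (card (UNIV :: 'a set)) - 1) / 2) ((real (card (UNIV :: 'a set)) - 3) / 4)"
proof -
  have neg_in_block_iff: "- g \<in> B \<longleftrightarrow> g \<notin> B" if "g \<noteq> 0" for g
    using even_iff_symmetric[OF that] odd by blast
  have nonzero_split: "- {0} = B \<union> uminus ` B" and "B \<inter> uminus ` B = {}"
    using neg_in_block_iff zero_notin_block by (force simp: image_iff)+
  then have card_nonzero: "card (- {0 :: 'a}) = 2 * card B"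
    by (simp add: card_Un_disjoint card_image)
  then have card_UNIV: "card (UNIV :: 'a set) = 2 * card B + 1"
    using card_Compl_add[of "{0 :: 'a}"] by simp
  have twice_diff_count: "2 * diff_count B g = lam" if "g \<noteq> 0" for g
    using lam_diff_count_eq[OF that] neg_in_block_iff[OF that] card_UNIV by (cases "g \<in> B") auto
  have "2 * (card B * (card B - 1)) = (\<Sum>g\<in>- {0}. 2 * diff_count B g)"
    by (simp add: sum_diff_count flip: sum_distrib_left)
  also have "\<dots> = 2 * card B * lam"
    using twice_diff_count card_nonzero by simp
  finally have lam_if_nonempty: "B \<noteq> {} \<Longrightarrow> lam = card B - 1"
    by (simp add: card_gt_0_iff)
  show ?thesis
    unfolding difference_set_def
  proof (intro conjI allI impI)
    show "real (card B) = (real (card (UNIV :: 'a set)) - 1) / 2"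
      using card_UNIV by simp
    fix g :: 'a assume "g \<noteq> 0"
    then have "B \<noteq> {}"
      using nonzero_split by auto
    then have "2 * diff_count B g + 1 = card B"
      using twice_diff_count[OF \<open>g \<noteq> 0\<close>] lam_if_nonempty by (simp add: card_gt_0_iff)
    from this[THEN arg_cong[where f = real]] card_UNIV[THEN arg_cong[where f = real]]
    show "real (diff_count B g) = (real (card (UNIV :: 'a set)) - 3) / 4"
      by simp
  qed
qed

end

lemma pdf_with_zero_block_if_partitioned_difference_family:
  assumes "partitioned_difference_family [B1, B2, {0}] lam"
  shows "pdf_with_zero_block B1 lam" and "pdf_with_zero_block B2 lam"
proof -
  note pdf = assms[unfolded partitioned_difference_family_def]
  have disjoint: "[B1, B2, {0}] ! i \<inter> [B1, B2, {0}] ! j = {}" if "i < 3" "j < 3" "i \<noteq> j" for i j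
    using pdf that by auto
  from disjoint[of 0 1] disjoint[of 0 2] disjoint[of 1 2]
  have "B1 \<inter> B2 = {}" "0 \<notin> B1" "0 \<notin> B2"
    by auto
  moreover have "B1 \<union> B2 \<union> {0} = UNIV"
    using pdf by auto
  ultimately have "B2 = - insert 0 B1" "B1 = - insert 0 B2"
    by auto
  moreover have "diff_count {0} g = 0" for g :: 'a
    unfolding diff_count_def by (simp add: case_prod_unfold)
  then have "diff_count B1 g + diff_count B2 g = lam" if "g \<noteq> 0" for g
    using pdf that by (simp add: eval_nat_numeral lessThan_Suc add.commute)
  ultimately show "pdf_with_zero_block B1 lam" "pdf_with_zero_block B2 lam"
    using \<open>0 \<notin> B1\<close> \<open>0 \<notin> B2\<close> by unfold_locales (simp_all add: add.commute)
qed

theorem proposition4p2: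
  fixes B1 B2 :: "'a::{ab_group_add,finite} set" and lam :: nat
  assumes "partitioned_difference_family [B1, B2, {0}] lam"
  shows "\<forall>B \<in> {B1, B2}.
           (odd (int (card (UNIV :: 'a set)) - int lam) \<longrightarrow>
              difference_set B ((real (card (UNIV :: 'a set)) - 1) / 2) ((real (card (UNIV :: 'a set)) - 3) / 4)) \<and>
           (even (int (card (UNIV :: 'a set)) - int lam) \<longrightarrow>
              partial_difference_set B (real (card B))
                 (real (card B) + (real lam - real (card (UNIV :: 'a set))) / 2)
                 (real (card B) + (real lam - real (card (UNIV :: 'a set))) / 2 + 1))"
  using pdf_with_zero_block_if_partitioned_difference_family[OF assms]
    pdf_with_zero_block.difference_set_if_odd pdf_with_zero_block.partial_difference_set_if_even
  by blast

end
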